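(* The relation of $\mathcal{C}$-$\mathrm{HH}$-symmetry is not transitive on the class of $\mathcal{C}$-$\mathrm{HH}$ graphs: there exist finite connected $\mathcal{C}$-$\mathrm{HH}$ graphs $G_1,G_2,G_3$ such that $G_1,G_2$ are $\mathcal{C}$-$\mathrm{HH}$-symmetric and $G_2,G_3$ are $\mathcal{C}$-$\mathrm{HH}$-symmetric, but $G_1,G_3$ are not $\mathcal{C}$-$\mathrm{HH}$-symmetric.
   Context: Graphs are simple; subgraphs are induced. A homomorphism maps edges to edges. A graph $G$ is $\mathcal{C}$-$\mathrm{HH}$ if every homomorphism from a finite connected induced subgraph of $G$ into $G$ extends to a homomorphism $G\to G$. For graphs $G_1,G_2$, $G_1$ is $\mathcal{C}$-$\mathrm{HH}$-morphic to $G_2$ if every homomorphism from a finite connected induced subgraph $A$ of $G_1$ onto an induced subgraph $B$ of $G_2$ extends to a homomorphism $G_1 \to G_2$; $G_1,G_2$ are $\mathcal{C}$-$\mathrm{HH}$-symmetric if each is $\mathcal{C}$-$\mathrm{HH}$-morphic to the other. *)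

theory Defs
  imports Main
begin

definition simple_graph :: "'a set \<Rightarrow> ('a \<Rightarrow> 'a \<Rightarrow> bool) \<Rightarrow> bool" where
  "simple_graph V E \<longleftrightarrow>
     (\<forall>x y. E x y \<longrightarrow> x \<in> V \<and> y \<in> V) \<and> (\<forall>x y. E x y \<longrightarrow> E y x) \<and> (\<forall>x. \<not> E x x)"

definition connected_on :: "('a \<Rightarrow> 'a \<Rightarrow> bool) \<Rightarrow> 'a set \<Rightarrow> bool" where
  "connected_on E A \<longleftrightarrow> A \<noteq> {} \<and>
     (\<forall>x\<in>A. \<forall>y\<in>A. (\<lambda>u v. E u v \<and> u \<in> A \<and> v \<in> A)\<^sup>*\<^sup>* x y)"

definition graph_hom :: "('a \<Rightarrow> 'a \<Rightarrow> bool) \<Rightarrow> 'a set \<Rightarrow> 'b set \<Rightarrow> ('b \<Rightarrow> 'b \<Rightarrow> bool)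
    \<Rightarrow> ('a \<Rightarrow> 'b) \<Rightarrow> bool" where
  "graph_hom E1 A V2 E2 f \<longleftrightarrow>
     (\<forall>x\<in>A. f x \<in> V2) \<and> (\<forall>x\<in>A. \<forall>y\<in>A. E1 x y \<longrightarrow> E2 (f x) (f y))"

definition CHH_morphic :: "'a set \<Rightarrow> ('a \<Rightarrow> 'a \<Rightarrow> bool) \<Rightarrow> 'b set \<Rightarrow> ('b \<Rightarrow> 'b \<Rightarrow> bool) \<Rightarrow> bool" where
  "CHH_morphic V1 E1 V2 E2 \<longleftrightarrow>
     (\<forall>A B f. A \<subseteq> V1 \<and> finite A \<and> connected_on E1 A \<and> B \<subseteq> V2 \<and>
        graph_hom E1 A B E2 f \<and> f ` A = B \<longrightarrow>
        (\<exists>g. graph_hom E1 V1 V2 E2 g \<and> (\<forall>x\<in>A. g x = f x)))"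

definition CHH :: "'a set \<Rightarrow> ('a \<Rightarrow> 'a \<Rightarrow> bool) \<Rightarrow> bool" where
  "CHH V E \<longleftrightarrow> CHH_morphic V E V E"

definition CHH_symmetric :: "'a set \<Rightarrow> ('a \<Rightarrow> 'a \<Rightarrow> bool) \<Rightarrow> 'b set \<Rightarrow> ('b \<Rightarrow> 'b \<Rightarrow> bool) \<Rightarrow> bool" where
  "CHH_symmetric V1 E1 V2 E2 \<longleftrightarrow> CHH_morphic V1 E1 V2 E2 \<and> CHH_morphic V2 E2 V1 E1"

end

theory Submission
  imports Defs
begin

text \<open>A path is C-HH-morphic to every graph without isolated vertices: a partial homomorphism
  defined on a connected set of vertices of the path lives on an interval, and folding the path
  onto that interval extends it (a single vertex is extended by 2-colouring instead). The hexagon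
  C6 is C-HH-morphic to such a graph if moreover the ends of every walk of length four have a
  common neighbour: rotate a vertex missed by the partial map to 5, extend over the path 0..4, and
  send 5 to a common neighbour of the images of 0 and 4. K2 and C6 satisfy the walk condition, so
  C6, K2 and P5 are C-HH, and C6, K2 as well as K2, P5 are C-HH-symmetric. But the identity on
  {0..4} does not extend to a homomorphism C6 \<rightarrow> P5, as the ends 0 and 4 of P5 have no common
  neighbour.\<close>

definition path_edge :: "nat \<Rightarrow> nat \<Rightarrow> nat \<Rightarrow> bool" where
  "path_edge n x y \<longleftrightarrow> x \<le> n \<and> y \<le> n \<and> (y = Suc x \<or> x = Suc y)"

definition hexagon_edge :: "nat \<Rightarrow> nat \<Rightarrow> bool" where
  "hexagon_edge x y \<longleftrightarrow> x < 6 \<and> y < 6 \<and> (y = (x + 1) mod 6 \<or> x = (y + 1) mod 6)"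

definition no_isolated :: "'a set \<Rightarrow> ('a \<Rightarrow> 'a \<Rightarrow> bool) \<Rightarrow> bool" where
  "no_isolated V E \<longleftrightarrow> (\<forall>v\<in>V. \<exists>w\<in>V. E v w)"

text \<open>Equivalently, every walk of length four extends to a closed walk of length six.\<close>
definition four_walks_close :: "'a set \<Rightarrow> ('a \<Rightarrow> 'a \<Rightarrow> bool) \<Rightarrow> bool" where
  "four_walks_close V E \<longleftrightarrow>
     (\<forall>a b c d e. a \<in> V \<and> e \<in> V \<and> E a b \<and> E b c \<and> E c d \<and> E d e \<longrightarrow>
        (\<exists>w\<in>V. E w a \<and> E w e))"

lemma connected_on_image:
  assumes "connected_on E A" and "\<forall>x\<in>A. \<forall>y\<in>A. E x y \<longrightarrow> E' (h x) (h y)"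
  shows "connected_on E' (h ` A)"
proof -
  have "(\<lambda>u v. E' u v \<and> u \<in> h ` A \<and> v \<in> h ` A)\<^sup>*\<^sup>* (h x) (h y)"
    if "(\<lambda>u v. E u v \<and> u \<in> A \<and> v \<in> A)\<^sup>*\<^sup>* x y" for x y
    using that
  proof (induction rule: rtranclp_induct)
    case (step y z)
    then show ?case using assms(2) by (simp add: rtranclp.rtrancl_into_rtrancl)
  qed simp
  then show ?thesis using assms(1) unfolding connected_on_def by auto
qed

lemma connected_on_atLeastAtMost:
  assumes "\<And>k. k < n \<Longrightarrow> E k (Suc k) \<and> E (Suc k) k"
  shows "connected_on E {0..n}"
proof -
  let ?R = "\<lambda>u v. E u v \<and> u \<in> {0..n} \<and> v \<in> {0..n}"
  have reach: "?R\<^sup>*\<^sup>* a b \<and> ?R\<^sup>*\<^sup>* b a" if "a \<le> b" "b \<le> n" for a b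
    using that
  proof (induction b)
    case (Suc b)
    show ?case
    proof (cases "a = Suc b")
      case False
      with Suc have "?R\<^sup>*\<^sup>* a b" "?R\<^sup>*\<^sup>* b a" by auto
      moreover have "?R b (Suc b)" "?R (Suc b) b" using Suc.prems assms by auto
      ultimately show ?thesis
        by (metis (no_types, lifting) rtranclp.rtrancl_into_rtrancl converse_rtranclp_into_rtranclp)
    qed simp
  qed simp
  show ?thesis
    unfolding connected_on_def
  proof (intro conjI ballI)
    fix x y assume "x \<in> {0..n}" "y \<in> {0..n}"
    then show "?R\<^sup>*\<^sup>* x y" using reach[of x y] reach[of y x] by (cases "x \<le> y") auto
  qed auto
qed

text \<open>Reflects \<open>\<nat>\<close> into the interval \<open>[i, j]\<close> at its two ends.\<close>
definition fold_onto :: "nat \<Rightarrow> nat \<Rightarrow> nat \<Rightarrow> nat" where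
  "fold_onto i j x =
     (if x < i then (if even (i - x) then i else Suc i)
      else if j < x then (if even (x - j) then j else j - 1) else x)"

lemma fold_onto_bounds: "i < j \<Longrightarrow> i \<le> fold_onto i j x \<and> fold_onto i j x \<le> j"
  unfolding fold_onto_def by auto

lemma fold_onto_id: "i \<le> x \<Longrightarrow> x \<le> j \<Longrightarrow> fold_onto i j x = x"
  unfolding fold_onto_def by auto

lemma fold_onto_Suc:
  assumes "i < j"
  shows "fold_onto i j (Suc x) = Suc (fold_onto i j x) \<or> fold_onto i j x = Suc (fold_onto i j (Suc x))"
proof -
  consider "Suc x < i" | "Suc x = i" | "i \<le> x \<and> Suc x \<le> j" | "x = j" | "j < x" by linarith
  then show ?thesis
  proof cases
    case 1
    then have "i - x = Suc (i - Suc x)" by simp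
    with 1 show ?thesis unfolding fold_onto_def by auto
  next
    case 5
    then have "Suc x - j = Suc (x - j)" by simp
    with 5 assms show ?thesis unfolding fold_onto_def by auto
  qed (use assms in \<open>auto simp: fold_onto_def\<close>)
qed

lemma path_edge_fold_onto:
  "i < j \<Longrightarrow> j \<le> n \<Longrightarrow> path_edge n x y \<Longrightarrow> path_edge n (fold_onto i j x) (fold_onto i j y)"
  unfolding path_edge_def
  using fold_onto_Suc[of i j x] fold_onto_Suc[of i j y] fold_onto_bounds[of i j x] fold_onto_bounds[of i j y]
  by auto

lemma connected_path_interval:
  assumes "connected_on (path_edge n) A" "a \<in> A" "b \<in> A" "a \<le> z" "z \<le> b"
  shows "z \<in> A"
proof -
  have "\<forall>z. a \<le> z \<and> z \<le> b \<or> b \<le> z \<and> z \<le> a \<longrightarrow> z \<in> A"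
    if "(\<lambda>u v. path_edge n u v \<and> u \<in> A \<and> v \<in> A)\<^sup>*\<^sup>* a b" for b
    using that
  proof (induction rule: rtranclp_induct)
    case (step y y')
    show ?case
    proof (intro allI impI)
      fix z assume "a \<le> z \<and> z \<le> y' \<or> y' \<le> z \<and> z \<le> a"
      with step.hyps(2) have "z = y' \<or> a \<le> z \<and> z \<le> y \<or> y \<le> z \<and> z \<le> a"
        unfolding path_edge_def by auto
      with step show "z \<in> A" by auto
    qed
  qed (use assms(2) in auto)
  with assms show ?thesis unfolding connected_on_def by blast
qed

lemma graph_hom_mono: "graph_hom E A B E2 f \<Longrightarrow> B \<subseteq> V2 \<Longrightarrow> graph_hom E A V2 E2 f"
  unfolding graph_hom_def by auto

lemma path_hom_extends:
  assumes "A \<subseteq> {0..n}" "connected_on (path_edge n) A" "graph_hom (path_edge n) A V2 E2 f"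
    and "no_isolated V2 E2" "symp E2"
  shows "\<exists>g. graph_hom (path_edge n) {0..n} V2 E2 g \<and> (\<forall>x\<in>A. g x = f x)"
proof -
  have "finite A" "A \<noteq> {}"
    using assms(1,2) finite_subset unfolding connected_on_def by auto
  define i where "i = Min A"
  define j where "j = Max A"
  have ij: "i \<in> A" "j \<in> A" "\<And>x. x \<in> A \<Longrightarrow> i \<le> x \<and> x \<le> j"
    using \<open>finite A\<close> \<open>A \<noteq> {}\<close> unfolding i_def j_def by auto
  have interval: "\<And>z. i \<le> z \<Longrightarrow> z \<le> j \<Longrightarrow> z \<in> A"
    using connected_path_interval[OF assms(2) ij(1,2)] by blast
  have f: "\<forall>x\<in>A. f x \<in> V2" "\<forall>x\<in>A. \<forall>y\<in>A. path_edge n x y \<longrightarrow> E2 (f x) (f y)"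
    using assms(3) unfolding graph_hom_def by auto
  show ?thesis
  proof (cases "i < j")
    case True
    have "j \<le> n" using ij(2) assms(1) by auto
    have "fold_onto i j x \<in> A" for x using fold_onto_bounds[OF True] interval by blast
    then show ?thesis
      using f path_edge_fold_onto[OF True \<open>j \<le> n\<close>] fold_onto_id ij(3)
      by (intro exI[of _ "\<lambda>x. f (fold_onto i j x)"]) (auto simp: graph_hom_def)
  next
    case False
    then have "A = {i}" using ij by force
    obtain w where w: "w \<in> V2" "E2 (f i) w"
      using assms(4) f(1) ij(1) unfolding no_isolated_def by blast
    have "even x \<noteq> even y" if "path_edge n x y" for x y
      using that unfolding path_edge_def by auto
    with w f(1) ij(1) assms(5) \<open>A = {i}\<close> show ?thesis
      by (intro exI[of _ "\<lambda>x. if even x = even i then f i else w"])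
        (auto simp: graph_hom_def dest: sympD)
  qed
qed

lemma path_CHH_morphic:
  assumes "no_isolated V2 E2" "symp E2"
  shows "CHH_morphic {0..n} (path_edge n) V2 E2"
  unfolding CHH_morphic_def
proof (intro allI impI, elim conjE)
  fix A B f
  assume "A \<subseteq> {0..n}" "connected_on (path_edge n) A" "B \<subseteq> V2" "graph_hom (path_edge n) A B E2 f"
  then show "\<exists>g. graph_hom (path_edge n) {0..n} V2 E2 g \<and> (\<forall>x\<in>A. g x = f x)"
    using path_hom_extends[OF _ _ graph_hom_mono assms] by blast
qed

lemma hexagon_edge_iff:
  "hexagon_edge x y \<longleftrightarrow> path_edge 5 x y \<or> x = 0 \<and> y = 5 \<or> x = 5 \<and> y = 0"
  unfolding hexagon_edge_def path_edge_def by (auto simp: mod_Suc)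

lemma hexagon_edge_path_edge: "x \<le> 4 \<Longrightarrow> y \<le> 4 \<Longrightarrow> hexagon_edge x y \<longleftrightarrow> path_edge 4 x y"
  unfolding hexagon_edge_iff path_edge_def by auto

definition rotate6 :: "nat \<Rightarrow> nat \<Rightarrow> nat" where
  "rotate6 k x = (x + k) mod 6"

lemma hexagon_edge_rotate6: "hexagon_edge x y \<Longrightarrow> hexagon_edge (rotate6 k x) (rotate6 k y)"
  unfolding hexagon_edge_def rotate6_def by (auto simp: mod_simps ac_simps)

lemma rotate6_rotate6: "rotate6 j (rotate6 k x) = rotate6 (j + k) x"
  unfolding rotate6_def by (simp add: mod_simps ac_simps)

lemma rotate6_inverse:
  assumes "m \<le> 5" "x < 6"
  shows "rotate6 (Suc m) (rotate6 (5 - m) x) = x"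
proof -
  have "Suc m + (5 - m) = 6" using assms(1) by simp
  then show ?thesis using assms(2) unfolding rotate6_rotate6 by (simp add: rotate6_def)
qed

lemma hexagon_edge_parity: "hexagon_edge x y \<Longrightarrow> even x \<noteq> even y"
  unfolding hexagon_edge_iff path_edge_def by auto

lemma hexagon_common_neighbour:
  assumes "a < 6" "e < 6" "even a = even e"
  shows "\<exists>w\<in>{0..5}. hexagon_edge w a \<and> hexagon_edge w e"
proof -
  have six: "{0..5::nat} = {0, 1, 2, 3, 4, 5}" by auto
  from assms(1,2) have "a = 0 \<or> a = 1 \<or> a = 2 \<or> a = 3 \<or> a = 4 \<or> a = 5"
    "e = 0 \<or> e = 1 \<or> e = 2 \<or> e = 3 \<or> e = 4 \<or> e = 5" by auto
  then show ?thesis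
    using assms(3) unfolding six by (elim disjE) (simp_all add: hexagon_edge_iff path_edge_def)
qed

lemma hexagon_four_walks_close: "four_walks_close {0..5} hexagon_edge"
  unfolding four_walks_close_def
proof (intro allI impI, elim conjE)
  fix a b c d e
  assume walk: "hexagon_edge a b" "hexagon_edge b c" "hexagon_edge c d" "hexagon_edge d e"
  then have "a < 6" "e < 6" unfolding hexagon_edge_def by auto
  moreover have "even a = even e" using walk by (auto dest!: hexagon_edge_parity)
  ultimately show "\<exists>w\<in>{0..5}. hexagon_edge w a \<and> hexagon_edge w e"
    by (rule hexagon_common_neighbour)
qed

lemma hexagon_hom_extends_avoiding_5:
  assumes "A \<subseteq> {0..4}" "connected_on hexagon_edge A" "graph_hom hexagon_edge A V2 E2 f"
    and "no_isolated V2 E2" "symp E2" "four_walks_close V2 E2"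
  shows "\<exists>g. graph_hom hexagon_edge {0..5} V2 E2 g \<and> (\<forall>x\<in>A. g x = f x)"
proof -
  have "connected_on (path_edge 4) (id ` A)"
    using assms(1) hexagon_edge_path_edge by (intro connected_on_image[OF assms(2)]) (auto simp: subset_iff)
  moreover have "graph_hom (path_edge 4) A V2 E2 f"
    using assms(1,3) hexagon_edge_path_edge unfolding graph_hom_def by (auto simp: subset_iff)
  ultimately obtain g where g: "graph_hom (path_edge 4) {0..4} V2 E2 g" "\<forall>x\<in>A. g x = f x"
    using path_hom_extends[OF assms(1) _ _ assms(4,5)] by auto
  have step: "E2 (g k) (g l)" if "l = Suc k" "l \<le> 4" for k l
    using g(1) that unfolding graph_hom_def path_edge_def by force
  have "g 0 \<in> V2" "E2 (g 0) (g 1)" "E2 (g 1) (g 2)" "E2 (g 2) (g 3)" "E2 (g 3) (g 4)" "g 4 \<in> V2"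
    using g(1) step[of 1 0] step[of 2 1] step[of 3 2] step[of 4 3] unfolding graph_hom_def by simp_all
  then obtain c where c: "c \<in> V2" "E2 c (g 0)" "E2 c (g 4)"
    using assms(6) unfolding four_walks_close_def by blast
  have "graph_hom hexagon_edge {0..5} V2 E2 (\<lambda>x. if x = 5 then c else g x)"
    unfolding graph_hom_def
  proof (intro conjI ballI impI)
    fix x y assume "x \<in> {0..5}" "y \<in> {0..5}" "hexagon_edge x y"
    then consider "x \<le> 4" "y \<le> 4" "path_edge 4 x y" | "x = 5" "y = 0 \<or> y = 4" | "y = 5" "x = 0 \<or> x = 4"
      unfolding hexagon_edge_iff path_edge_def by fastforce
    then show "E2 (if x = 5 then c else g x) (if y = 5 then c else g y)"
      using g(1) c assms(5) unfolding graph_hom_def by cases (auto dest: sympD)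
  qed (use g(1) c(1) in \<open>auto simp: graph_hom_def\<close>)
  with g(2) assms(1) show ?thesis by force
qed

lemma hexagon_CHH_morphic:
  assumes "no_isolated V2 E2" "symp E2" "four_walks_close V2 E2"
  shows "CHH_morphic {0..5} hexagon_edge V2 E2"
  unfolding CHH_morphic_def
proof (intro allI impI, elim conjE)
  fix A B f
  assume A: "A \<subseteq> {0..5}" "connected_on hexagon_edge A" and "B \<subseteq> V2" "graph_hom hexagon_edge A B E2 f"
  then have f: "graph_hom hexagon_edge A V2 E2 f" by (blast intro: graph_hom_mono)
  show "\<exists>g. graph_hom hexagon_edge {0..5} V2 E2 g \<and> (\<forall>x\<in>A. g x = f x)"
  proof (cases "A = {0..5}")
    case False
    then have "\<not> {0..5} \<subseteq> A" using A(1) by blast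
    then obtain m where m: "m \<le> 5" "m \<notin> A" by force
    let ?\<sigma> = "rotate6 (5 - m)" and ?\<tau> = "rotate6 (Suc m)"
    have \<tau>\<sigma>: "?\<tau> (?\<sigma> x) = x" if "x \<in> A" for x
      using rotate6_inverse[OF m(1)] A(1) that by auto
    have "?\<sigma> x \<noteq> 5" if "x \<in> A" for x
      using \<tau>\<sigma>[OF that] m that by (auto simp: rotate6_def)
    then have "?\<sigma> ` A \<subseteq> {0..4}" by (force simp: rotate6_def)
    moreover have "connected_on hexagon_edge (?\<sigma> ` A)"
      by (intro connected_on_image[OF A(2)]) (blast intro: hexagon_edge_rotate6)
    moreover have "hexagon_edge x y" if "x \<in> A" "y \<in> A" "hexagon_edge (?\<sigma> x) (?\<sigma> y)" for x y
      using hexagon_edge_rotate6[OF that(3), of "Suc m"] \<tau>\<sigma>[OF that(1)] \<tau>\<sigma>[OF that(2)] by simp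
    then have "graph_hom hexagon_edge (?\<sigma> ` A) V2 E2 (f \<circ> ?\<tau>)"
      using f \<tau>\<sigma> unfolding graph_hom_def by auto
    ultimately obtain g where g: "graph_hom hexagon_edge {0..5} V2 E2 g" "\<forall>y\<in>?\<sigma> ` A. g y = (f \<circ> ?\<tau>) y"
      using hexagon_hom_extends_avoiding_5[OF _ _ _ assms] by blast
    have "?\<sigma> x \<in> {0..5}" for x by (simp add: rotate6_def)
    with g(1) have "graph_hom hexagon_edge {0..5} V2 E2 (g \<circ> ?\<sigma>)"
      unfolding graph_hom_def by (simp add: hexagon_edge_rotate6)
    moreover have "(g \<circ> ?\<sigma>) x = f x" if "x \<in> A" for x
      using g(2) \<tau>\<sigma>[OF that] that by simp
    ultimately show ?thesis by blast
  qed (use f in blast)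
qed

lemma simple_graph_path: "simple_graph {0..n} (path_edge n)"
  unfolding simple_graph_def path_edge_def by auto

lemma simple_graph_hexagon: "simple_graph {0..5} hexagon_edge"
  unfolding simple_graph_def hexagon_edge_iff path_edge_def by auto

lemma connected_on_path: "connected_on (path_edge n) {0..n}"
  by (rule connected_on_atLeastAtMost) (auto simp: path_edge_def)

lemma connected_on_hexagon: "connected_on hexagon_edge {0..5}"
  by (rule connected_on_atLeastAtMost) (auto simp: hexagon_edge_iff path_edge_def)

lemma symp_path_edge: "symp (path_edge n)"
  unfolding symp_def path_edge_def by auto

lemma symp_hexagon_edge: "symp hexagon_edge"
  unfolding symp_def hexagon_edge_def by auto

lemma no_isolated_path:
  assumes "0 < n"
  shows "no_isolated {0..n} (path_edge n)"
  unfolding no_isolated_def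
proof
  fix v assume "v \<in> {0..n}"
  with assms have "path_edge n v (if v < n then Suc v else v - 1)"
    unfolding path_edge_def by auto
  then show "\<exists>w\<in>{0..n}. path_edge n v w" unfolding path_edge_def by auto
qed

lemma no_isolated_hexagon: "no_isolated {0..5} hexagon_edge"
  using no_isolated_path[of 5] unfolding no_isolated_def hexagon_edge_iff by (simp add: bex_disj_distrib)

lemma four_walks_close_K2: "four_walks_close {0..1} (path_edge 1)"
  unfolding four_walks_close_def path_edge_def by auto

lemma hexagon_not_CHH_morphic_path: "\<not> CHH_morphic {0..5} hexagon_edge {0..4} (path_edge 4)"
proof
  assume "CHH_morphic {0..5} hexagon_edge {0..4} (path_edge 4)"
  moreover have "connected_on hexagon_edge {0..4}"
    by (rule connected_on_atLeastAtMost) (auto simp: hexagon_edge_iff path_edge_def)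
  moreover have "graph_hom hexagon_edge {0..4} {0..4} (path_edge 4) id"
    unfolding graph_hom_def using hexagon_edge_path_edge by auto
  ultimately obtain g where g: "graph_hom hexagon_edge {0..5} {0..4} (path_edge 4) g" "\<forall>x\<in>{0..4}. g x = x"
    unfolding CHH_morphic_def by (auto dest!: spec[of _ "{0..4}"] spec[of _ id])
  have "path_edge 4 (g x) (g y)" if "hexagon_edge x y" "x \<le> 5" "y \<le> 5" for x y
    using g(1) that unfolding graph_hom_def by auto
  from this[of 5 0] this[of 5 4] g(2) have "path_edge 4 (g 5) 0" "path_edge 4 (g 5) 4"
    by (simp_all add: hexagon_edge_def)
  then show False unfolding path_edge_def by auto
qed

theorem lemma3p3:
  shows "\<exists>(V1::nat set) E1 (V2::nat set) E2 (V3::nat set) E3.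
    simple_graph V1 E1 \<and> finite V1 \<and> connected_on E1 V1 \<and> CHH V1 E1 \<and>
    simple_graph V2 E2 \<and> finite V2 \<and> connected_on E2 V2 \<and> CHH V2 E2 \<and>
    simple_graph V3 E3 \<and> finite V3 \<and> connected_on E3 V3 \<and> CHH V3 E3 \<and>
    CHH_symmetric V1 E1 V2 E2 \<and> CHH_symmetric V2 E2 V3 E3 \<and>
    \<not> CHH_symmetric V1 E1 V3 E3"
proof -
  have K2: "no_isolated {0..1} (path_edge 1)" and P5: "no_isolated {0..4} (path_edge 4)"
    by (simp_all add: no_isolated_path)
  note hexagon = no_isolated_hexagon symp_hexagon_edge hexagon_four_walks_close
  have "CHH {0..5} hexagon_edge" "CHH {0..1} (path_edge 1)" "CHH {0..4} (path_edge 4)"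
    unfolding CHH_def using hexagon_CHH_morphic[OF hexagon] path_CHH_morphic[OF K2 symp_path_edge]
      path_CHH_morphic[OF P5 symp_path_edge] by blast+
  moreover have "CHH_symmetric {0..5} hexagon_edge {0..1} (path_edge 1)"
    unfolding CHH_symmetric_def
    using hexagon_CHH_morphic[OF K2 symp_path_edge four_walks_close_K2]
      path_CHH_morphic[OF no_isolated_hexagon symp_hexagon_edge] by blast
  moreover have "CHH_symmetric {0..1} (path_edge 1) {0..4} (path_edge 4)"
    unfolding CHH_symmetric_def
    using path_CHH_morphic[OF P5 symp_path_edge] path_CHH_morphic[OF K2 symp_path_edge] by blast
  moreover have "\<not> CHH_symmetric {0..5} hexagon_edge {0..4} (path_edge 4)"
    unfolding CHH_symmetric_def using hexagon_not_CHH_morphic_path by blast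
  ultimately show ?thesis
    using simple_graph_hexagon simple_graph_path connected_on_hexagon connected_on_path by blast
qed

end
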